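(* Let $T$ be a rhombic alternative tableau of type $X\in B_n^r$ with tiling $\mathcal{T}$, and run the label-passing algorithm on $T$. Suppose that a label $J$ is passed along the line of a west-strip $\mathbf{w}$ eastward out of a tile $\mathbf{t}$ of $\mathbf{w}$, and that no tile of $\mathbf{w}$ to the right of $\mathbf{t}$ contains a $\beta$. Then at the completion of the algorithm, the southeast boundary edge (external vertex) of $\mathbf{w}$ carries the label $\{J_{\max}\}$, where $J_{\max}=\max J$.
   Context: Words and diagrams. For $0\le r\le n$ let $B_n^r$ be the set of words $X\in\{H,L,0\}^n$ with exactly $r$ letters $L$. If $X$ has $k$ letters $H$, $r$ letters $L$ and $\ell$ letters $0$, its rhombic diagram $\Gamma(X)$ is the closed region bounded by two paths of unit steps, using the directions west (horizontal), south (vertical) and southwest (diagonal: a fixed unit vector strictly between west and south), both going from a point $P$ to a point $Q$: the northwest boundary consists of $\ell$ west steps, then $r$ southwest steps, then $k$ south steps; the southeast boundary is obtained by reading $X$ left to right and taking a west step for each $0$, a southwest step for each $L$, a south step for each $H$. A tiling of $\Gamma(X)$ is a tiling by unit rhombi of three kinds: squares (horizontal and vertical edges), tall rhombi (vertical and diagonal edges), short rhombi (horizontal and diagonal edges). A west-strip (resp. north-strip, northwest-strip) is a maximal set of tiles connected through shared vertical (resp. horizontal, diagonal) edges; each runs from an edge of the southeast boundary to an edge of the northwest boundary. Rhombic alternative tableaux. A rhombic alternative tableau (RAT) of type $X$ with tiling $\mathcal{T}$ is a filling of the tiles of $\mathcal{T}$, each tile empty or containing one of $\alpha,\beta,q$,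 where $\alpha$ occurs only in squares and short rhombi and $\beta$ only in squares and tall rhombi, such that: (i) every tile in the same west-strip as a tile containing $\beta$ and to its left is empty; (ii) every tile in the same north-strip as a tile containing $\alpha$ and above it is empty; (iii) every tile not forced to be empty by (i),(ii) contains $\alpha$, $\beta$ or $q$. Label-passing algorithm. A label is a finite set of consecutive integers; for labels $C,D$ write $D\succ C$ if both are nonempty and $\min D=\max C+1$. Given a RAT $T$: through each west-strip draw a line through the midpoints of its vertical edges, through each north-strip a line through midpoints of its horizontal edges, and through each northwest-strip a line through midpoints of its diagonal edges (all passing through the tile centres). For every tile containing $\alpha$ erase the part of its north-strip line above the tile's centre; for every tile containing $\beta$ erase the part of its west-strip line to the left of the tile's centre. This yields a forest of binary trees whose branching vertices are the centres of tiles containing $\alpha$ or $\beta$, whose leaves (external vertices) are the southeast boundary edges and whose roots are northwest boundary edges; roots are red/green/blue according as they lie on a west-/northwest-/north-strip. Add a special trivial green root at $Q$ with one fictitious leaf. Order the roots: red roots from top to bottom, then green roots (starting with the special one) from southwest to northeast, then blue roots from left to right. Label the roots so that each root label has as many elements as its tree has leaves (one for the special root), each root's label is $\succ$ the label of the preceding root, and the union of all root labels is $\{1,\dots,n+1\}$. Labels are then passed from the roots towards the leaves (southeastward) along branches, unchanged along branches; when a label $B$ reaches a branching vertex $v$ it is split as $B=C\cup D$ with $D\succ C$, each of the two outgoing branches getting a label of size equal to its number of leaves, according to: (I) if $v$ lies in a rhombus (tall or short), $D$ goes to the outgoing branch along the northwest-strip; (II) if $v$ lies in a square containing $\alpha$,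 $D$ goes to the branch leaving eastward and $C$ to the branch leaving southward; (III) if $v$ lies in a square containing $\beta$, $D$ goes to the branch leaving southward and $C$ to the branch leaving eastward. At completion every southeast boundary edge carries a singleton label. *)

theory Defs
  imports Main
begin

text \<open>Letters of a word in B_n^r: H, L and 0 (written Z).\<close>
datatype letter = H | L | Z

datatype sym = Emp | Alpha | Beta | Qt

fun rank :: "letter \<Rightarrow> nat" where
  "rank Z = 0" | "rank L = 1" | "rank H = 2"

definition Bnr :: "nat \<Rightarrow> nat \<Rightarrow> letter list set" where
  "Bnr n r = {X. length X = n \<and> count_list X L = r}"

text \<open>Tilings of Gamma(X) are encoded by flip sequences ws: starting from the southeast
boundary (the word X, strips named by their SE boundary position 0..n-1), the k-th tile is
added by swapping the adjacent letters at positions ws!k and ws!k+1 of the current boundary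
path (H0 -> 0H square, HL -> LH tall rhombus, L0 -> 0L short rhombus), until the northwest
boundary 0^l L^r H^k is reached.  arr X ws m is the list of strips (by current position) after
m tiles.\<close>

definition swap_adj :: "nat \<Rightarrow> nat list \<Rightarrow> nat list" where
  "swap_adj p xs = xs[p := xs ! Suc p, Suc p := xs ! p]"

definition arr :: "letter list \<Rightarrow> nat list \<Rightarrow> nat \<Rightarrow> nat list" where
  "arr X ws m = fold swap_adj (take m ws) [0..<length X]"

text \<open>The two strips crossing at tile k: tu has the larger letter (H over L over 0).\<close>
definition tu :: "letter list \<Rightarrow> nat list \<Rightarrow> nat \<Rightarrow> nat" where
  "tu X ws k = arr X ws k ! (ws ! k)"

definition tv :: "letter list \<Rightarrow> nat list \<Rightarrow> nat \<Rightarrow> nat" where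
  "tv X ws k = arr X ws k ! Suc (ws ! k)"

definition is_tiling :: "letter list \<Rightarrow> nat list \<Rightarrow> bool" where
  "is_tiling X ws \<longleftrightarrow>
     (\<forall>k<length ws. Suc (ws ! k) < length X \<and> rank (X ! tu X ws k) > rank (X ! tv X ws k)) \<and>
     map ((!) X) (arr X ws (length ws)) =
       replicate (count_list X Z) Z @ replicate (count_list X L) L @ replicate (count_list X H) H"

definition in_tile :: "letter list \<Rightarrow> nat list \<Rightarrow> nat \<Rightarrow> nat \<Rightarrow> bool" where
  "in_tile X ws s k \<longleftrightarrow> s = tu X ws k \<or> s = tv X ws k"

text \<open>Tiles of strip s, ordered from its SE boundary edge towards the NW boundary.\<close>
definition tiles :: "letter list \<Rightarrow> nat list \<Rightarrow> nat \<Rightarrow> nat list" where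
  "tiles X ws s = filter (in_tile X ws s) [0..<length ws]"

definition ntiles :: "letter list \<Rightarrow> nat list \<Rightarrow> nat \<Rightarrow> nat" where
  "ntiles X ws s = length (tiles X ws s)"

definition tidx :: "letter list \<Rightarrow> nat list \<Rightarrow> nat \<Rightarrow> nat \<Rightarrow> nat" where
  "tidx X ws s k = length (filter (in_tile X ws s) [0..<k])"

text \<open>Rhombic alternative tableaux.  The west-strip of a beta tile is its H strip tu,
the north-strip of an alpha tile is its 0 strip tv; "to the left"/"above" = later along the
strip.\<close>
definition forced_empty :: "letter list \<Rightarrow> nat list \<Rightarrow> (nat \<Rightarrow> sym) \<Rightarrow> nat \<Rightarrow> bool" where
  "forced_empty X ws f k \<longleftrightarrow>
     (\<exists>k'<k. f k' = Beta \<and> in_tile X ws (tu X ws k') k) \<or>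
     (\<exists>k'<k. f k' = Alpha \<and> in_tile X ws (tv X ws k') k)"

definition is_RAT :: "letter list \<Rightarrow> nat list \<Rightarrow> (nat \<Rightarrow> sym) \<Rightarrow> bool" where
  "is_RAT X ws f \<longleftrightarrow> (\<forall>k<length ws.
     (f k = Alpha \<longrightarrow> X ! tv X ws k = Z) \<and>
     (f k = Beta \<longrightarrow> X ! tu X ws k = H) \<and>
     (forced_empty X ws f k \<longrightarrow> f k = Emp) \<and>
     (\<not> forced_empty X ws f k \<longrightarrow> f k \<noteq> Emp))"

text \<open>Segments of strip lines: (s, j) is the piece of the line of strip s between its
(j-1)-th and j-th tile (j = 0: starts at the SE boundary edge; j = ntiles: ends at the NW
boundary edge).  Tile k erases the line of strip s beyond its centre if s is a north-strip
and k contains alpha, or s is a west-strip and k contains beta.\<close>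
definition erases :: "letter list \<Rightarrow> (nat \<Rightarrow> sym) \<Rightarrow> nat \<Rightarrow> nat \<Rightarrow> bool" where
  "erases X f s k \<longleftrightarrow> (X ! s = H \<and> f k = Beta) \<or> (X ! s = Z \<and> f k = Alpha)"

definition present :: "letter list \<Rightarrow> nat list \<Rightarrow> (nat \<Rightarrow> sym) \<Rightarrow> nat \<Rightarrow> nat \<Rightarrow> bool" where
  "present X ws f s j \<longleftrightarrow> j \<le> ntiles X ws s \<and>
     \<not> (\<exists>a<j. erases X f s (tiles X ws s ! a))"

definition other :: "letter list \<Rightarrow> nat list \<Rightarrow> nat \<Rightarrow> nat \<Rightarrow> nat" where
  "other X ws k s = (if s = tu X ws k then tv X ws k else tu X ws k)"

text \<open>Moving from a leaf towards its root.\<close>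
definition next_seg :: "letter list \<Rightarrow> nat list \<Rightarrow> (nat \<Rightarrow> sym) \<Rightarrow> nat \<times> nat \<Rightarrow> nat \<times> nat" where
  "next_seg X ws f \<sigma> = (let s = fst \<sigma>; j = snd \<sigma>; k = tiles X ws s ! j in
     if erases X f s k then (other X ws k s, Suc (tidx X ws (other X ws k s) k))
     else (s, Suc j))"

definition step_rel :: "letter list \<Rightarrow> nat list \<Rightarrow> (nat \<Rightarrow> sym) \<Rightarrow> ((nat \<times> nat) \<times> (nat \<times> nat)) set" where
  "step_rel X ws f = {(\<sigma>, next_seg X ws f \<sigma>) | \<sigma>. fst \<sigma> < length X \<and> snd \<sigma> < ntiles X ws (fst \<sigma>)}"

definition leafcount :: "letter list \<Rightarrow> nat list \<Rightarrow> (nat \<Rightarrow> sym) \<Rightarrow> nat \<times> nat \<Rightarrow> nat" where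
  "leafcount X ws f \<sigma> = card {i. i < length X \<and> ((i, 0), \<sigma>) \<in> (step_rel X ws f)\<^sup>*}"

definition is_root :: "letter list \<Rightarrow> nat list \<Rightarrow> (nat \<Rightarrow> sym) \<Rightarrow> nat \<Rightarrow> bool" where
  "is_root X ws f s \<longleftrightarrow> present X ws f s (ntiles X ws s)"

text \<open>Roots in the prescribed order: red (NW boundary south edges, top to bottom), the
special green root at Q (None), green (SW to NE), blue (left to right).\<close>
definition root_order :: "letter list \<Rightarrow> nat list \<Rightarrow> (nat \<Rightarrow> sym) \<Rightarrow> nat option list" where
  "root_order X ws f = (let \<pi> = arr X ws (length ws); l = count_list X Z; r = count_list X L;
       n = length X; rt = is_root X ws f; g = (\<lambda>p. \<pi> ! p) in
     map Some (filter rt (map g [l + r..<n])) @ [None] @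
     map Some (filter rt (map g (rev [l..<l + r]))) @
     map Some (filter rt (map g (rev [0..<l]))))"

definition root_size :: "letter list \<Rightarrow> nat list \<Rightarrow> (nat \<Rightarrow> sym) \<Rightarrow> nat option \<Rightarrow> nat" where
  "root_size X ws f ro = (case ro of None \<Rightarrow> 1 | Some s \<Rightarrow> leafcount X ws f (s, ntiles X ws s))"

definition is_label :: "nat set \<Rightarrow> bool" where
  "is_label J \<longleftrightarrow> (\<exists>a b. J = {a..b})"

definition succ_label :: "nat set \<Rightarrow> nat set \<Rightarrow> bool" where
  "succ_label D C \<longleftrightarrow> C \<noteq> {} \<and> D \<noteq> {} \<and> Min D = Max C + 1"

text \<open>Strip continuing past a branching tile (towards the root) and strip receiving D.\<close>
definition cont_strip :: "letter list \<Rightarrow> nat list \<Rightarrow> (nat \<Rightarrow> sym) \<Rightarrow> nat \<Rightarrow> nat" where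
  "cont_strip X ws f k = (if f k = Alpha then tu X ws k else tv X ws k)"

definition d_strip :: "letter list \<Rightarrow> nat list \<Rightarrow> (nat \<Rightarrow> sym) \<Rightarrow> nat \<Rightarrow> nat" where
  "d_strip X ws f k =
     (if X ! tu X ws k = H \<and> X ! tv X ws k = Z
      then (if f k = Alpha then tu X ws k else tv X ws k)
      else (if X ! tu X ws k = L then tu X ws k else tv X ws k))"

text \<open>lam is a run of the label-passing algorithm: lam (s,j) is the label carried by segment
(s,j); lam (s,0) is the final label of the SE boundary edge of strip s.\<close>
definition label_run :: "letter list \<Rightarrow> nat list \<Rightarrow> (nat \<Rightarrow> sym) \<Rightarrow> (nat \<times> nat \<Rightarrow> nat set) \<Rightarrow> bool" where
  "label_run X ws f lam \<longleftrightarrow>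
     (\<exists>Ls. length Ls = length (root_order X ws f) \<and>
        (\<forall>i<length Ls. is_label (Ls ! i) \<and> card (Ls ! i) = root_size X ws f (root_order X ws f ! i)) \<and>
        (\<forall>i. Suc i < length Ls \<longrightarrow> succ_label (Ls ! Suc i) (Ls ! i)) \<and>
        \<Union> (set Ls) = {1..length X + 1} \<and>
        (\<forall>i<length Ls. \<forall>s. root_order X ws f ! i = Some s \<longrightarrow> lam (s, ntiles X ws s) = Ls ! i)) \<and>
     (\<forall>s<length X. \<forall>j<ntiles X ws s. present X ws f s j \<and> f (tiles X ws s ! j) \<notin> {Alpha, Beta}
         \<longrightarrow> lam (s, j) = lam (s, Suc j)) \<and>
     (\<forall>k<length ws. f k \<in> {Alpha, Beta} \<and>
         present X ws f (cont_strip X ws f k) (Suc (tidx X ws (cont_strip X ws f k) k)) \<longrightarrow>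
        (let c = cont_strip X ws f k; ds = d_strip X ws f k; cs = other X ws k ds;
             Dseg = (ds, tidx X ws ds k); Cseg = (cs, tidx X ws cs k) in
         lam Dseg \<union> lam Cseg = lam (c, Suc (tidx X ws c k)) \<and>
         card (lam Dseg) = leafcount X ws f Dseg \<and>
         card (lam Cseg) = leafcount X ws f Cseg \<and>
         succ_label (lam Dseg) (lam Cseg)))"

end

theory Submission
  imports Defs
begin

(* Below t no tile of the west-strip w contains beta, so the line of w is never erased there
   and the label J travels along it down to the boundary edge of w.  A plain tile passes the
   label on unchanged; at an alpha tile w is the west-strip of a square and receives the upper
   part D of the split, which has the same maximum.  So the final label has maximum max J.  It is
   a singleton because it equals the label of w at the first branching tile of w (or at the root
   of w), and the size of that label is the number of leaves below it, which is one. *)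

lemma length_set_fold_swap_adj:
  "\<forall>p\<in>set ps. Suc p < length xs \<Longrightarrow>
   length (fold swap_adj ps xs) = length xs \<and> set (fold swap_adj ps xs) = set xs"
  by (induction ps arbitrary: xs) (auto simp: swap_adj_def)

lemma Max_Un_succ_label:
  assumes "finite (D \<union> C)" "succ_label D C"
  shows "Max (D \<union> C) = Max D"
proof -
  have fin: "finite D" "finite C" and ne: "D \<noteq> {}" "C \<noteq> {}" and "Min D = Max C + 1"
    using assms by (auto simp: succ_label_def)
  moreover have "Min D \<le> Max D"
    using fin(1) ne(1) by (meson Max_ge Min_in)
  ultimately have "Max C < Max D"
    by linarith
  then show ?thesis
    using Max_Un[OF fin(1) ne(1) fin(2) ne(2)] by simp
qed

lemma tidx_tiles:
  assumes "in_tile X ws s k" "k < length ws"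
  shows "tidx X ws s k < ntiles X ws s" "tiles X ws s ! tidx X ws s k = k"
proof -
  have "[0..<length ws] = [0..<k] @ k # [Suc k..<length ws]"
    using assms(2) by (metis le0 less_imp_le_nat le_add_diff_inverse upt_add_eq_append upt_conv_Cons)
  then show "tidx X ws s k < ntiles X ws s" "tiles X ws s ! tidx X ws s k = k"
    unfolding tiles_def ntiles_def tidx_def by (simp_all add: nth_append assms(1))
qed

lemma tiles_nth:
  assumes "j < ntiles X ws s"
  shows "tiles X ws s ! j < length ws" "in_tile X ws s (tiles X ws s ! j)"
    "tidx X ws s (tiles X ws s ! j) = j"
proof -
  have "tiles X ws s ! j \<in> set (tiles X ws s)"
    using assms by (simp add: ntiles_def)
  then show k: "tiles X ws s ! j < length ws" "in_tile X ws s (tiles X ws s ! j)"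
    by (auto simp: tiles_def)
  have "distinct (tiles X ws s)"
    by (simp add: tiles_def)
  with tidx_tiles[OF k(2,1)] assms show "tidx X ws s (tiles X ws s ! j) = j"
    by (simp add: nth_eq_iff_index_eq ntiles_def)
qed

lemma tiles_strict_mono:
  assumes "a < b" "b < ntiles X ws s"
  shows "tiles X ws s ! a < tiles X ws s ! b"
proof -
  have "sorted_wrt (<) (tiles X ws s)"
    unfolding tiles_def by (rule sorted_wrt_filter) simp
  then show ?thesis
    using assms sorted_wrt_nth_less by (fastforce simp: ntiles_def)
qed

lemma step_rel_iff:
  "(\<sigma>, \<tau>) \<in> step_rel X ws f \<longleftrightarrow>
   \<tau> = next_seg X ws f \<sigma> \<and> fst \<sigma> < length X \<and> snd \<sigma> < ntiles X ws (fst \<sigma>)"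
  by (cases \<sigma>) (auto simp: step_rel_def)

lemma leaf_reaches_segment:
  assumes "s < length X" "m \<le> ntiles X ws s" "\<forall>j<m. \<not> erases X f s (tiles X ws s ! j)"
  shows "((s, 0), (s, m)) \<in> (step_rel X ws f)\<^sup>*"
  using assms(2,3)
proof (induction m)
  case 0
  then show ?case by simp
next
  case (Suc m)
  then have "((s, m), (s, Suc m)) \<in> step_rel X ws f"
    using assms(1) by (simp add: step_rel_iff next_seg_def Let_def)
  with Suc show ?case
    by (auto intro: rtrancl_into_rtrancl)
qed

lemma leafcount_pos:
  assumes "s < length X" "m \<le> ntiles X ws s" "\<forall>j<m. \<not> erases X f s (tiles X ws s ! j)"
  shows "0 < leafcount X ws f (s, m)"
proof -
  have "s \<in> {i. i < length X \<and> ((i, 0), (s, m)) \<in> (step_rel X ws f)\<^sup>*}"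
    using leaf_reaches_segment[OF assms] assms(1) by simp
  then show ?thesis
    unfolding leafcount_def by (auto simp: card_gt_0_iff)
qed

text \<open>A step of step_rel that enters strip s from another strip does so just past a tile of s
  erasing the line it leaves, hence past a tile containing alpha or beta.\<close>

lemma leafcount_eq_1:
  assumes "s < length X" "m \<le> ntiles X ws s"
    and plain: "\<forall>j<m. f (tiles X ws s ! j) \<notin> {Alpha, Beta}"
  shows "leafcount X ws f (s, m) = 1"
proof -
  have on_strip: "\<exists>j\<le>m. \<sigma> = (s, j)" if "(\<sigma>, (s, m)) \<in> (step_rel X ws f)\<^sup>*" for \<sigma>
    using that
  proof (induction rule: converse_rtrancl_induct)
    case base
    then show ?case by auto
  next
    case (step \<sigma> \<tau>)
    obtain j where j: "j \<le> m" "\<tau> = (s, j)"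
      using step.IH by blast
    obtain s' i where \<sigma>: "\<sigma> = (s', i)"
      by force
    have \<tau>: "\<tau> = next_seg X ws f (s', i)" and i: "i < ntiles X ws s'"
      using step.hyps(1) by (auto simp: step_rel_iff \<sigma>)
    define k where "k = tiles X ws s' ! i"
    show ?case
    proof (cases "erases X f s' k")
      case True
      then have "other X ws k s' = s" "Suc (tidx X ws s k) = j"
        using \<tau> j by (simp_all add: next_seg_def Let_def k_def)
      moreover have "in_tile X ws s k"
        using \<open>other X ws k s' = s\<close> by (auto simp: other_def in_tile_def)
      moreover have "k < length ws"
        using tiles_nth(1)[OF i] k_def by simp
      ultimately have "f k \<notin> {Alpha, Beta}"
        using plain tidx_tiles j(1) by (metis Suc_le_lessD)
      with True show ?thesis
        by (auto simp: erases_def)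
    next
      case False
      then show ?thesis
        using \<tau> j \<sigma> by (simp add: next_seg_def Let_def k_def)
    qed
  qed
  have "\<forall>j<m. \<not> erases X f s (tiles X ws s ! j)"
    using plain by (auto simp: erases_def)
  then have "{i. i < length X \<and> ((i, 0), (s, m)) \<in> (step_rel X ws f)\<^sup>*} = {s}"
    using on_strip leaf_reaches_segment[OF assms(1,2)] assms(1) by fastforce
  then show ?thesis
    by (simp add: leafcount_def)
qed

lemma arr_final_perm:
  assumes "is_tiling X ws"
  shows "length (arr X ws (length ws)) = length X" "set (arr X ws (length ws)) = {0..<length X}"
proof -
  have "\<forall>p\<in>set ws. Suc p < length [0..<length X]"
    using assms unfolding is_tiling_def by (auto simp: in_set_conv_nth)
  from length_set_fold_swap_adj[OF this]
  show "length (arr X ws (length ws)) = length X" "set (arr X ws (length ws)) = {0..<length X}"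
    by (simp_all add: arr_def)
qed

lemma root_in_root_order:
  assumes "is_tiling X ws" "s < length X" "is_root X ws f s"
  shows "Some s \<in> set (root_order X ws f)"
proof -
  obtain p where p: "p < length X" "arr X ws (length ws) ! p = s"
    using arr_final_perm[OF assms(1)] assms(2) by (metis atLeastLessThan_iff in_set_conv_nth le0)
  then show ?thesis
    using assms(3) unfolding root_order_def Let_def
    by (cases "p < count_list X Z"; cases "p < count_list X Z + count_list X L") force+
qed

locale label_passing =
  fixes X :: "letter list" and ws :: "nat list" and f :: "nat \<Rightarrow> sym"
    and lam :: "nat \<times> nat \<Rightarrow> nat set"
  assumes tiling: "is_tiling X ws" and RAT: "is_RAT X ws f" and run: "label_run X ws f lam"
begin

lemma rank_tv_less_tu: "k < length ws \<Longrightarrow> rank (X ! tv X ws k) < rank (X ! tu X ws k)"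
  using tiling by (simp add: is_tiling_def)

lemma tv_H_free: "k < length ws \<Longrightarrow> X ! tv X ws k \<noteq> H"
  using rank_tv_less_tu[of k] by (cases "X ! tu X ws k") auto

lemma tu_Z_free: "k < length ws \<Longrightarrow> X ! tu X ws k \<noteq> Z"
  using rank_tv_less_tu[of k] by auto

lemma Alpha_tv_Z: "k < length ws \<Longrightarrow> f k = Alpha \<Longrightarrow> X ! tv X ws k = Z"
  using RAT unfolding is_RAT_def by blast

lemma forced_empty_Emp: "k < length ws \<Longrightarrow> forced_empty X ws f k \<Longrightarrow> f k = Emp"
  using RAT unfolding is_RAT_def by blast

lemma card_root_label:
  assumes "s < length X" "is_root X ws f s"
  shows "card (lam (s, ntiles X ws s)) = leafcount X ws f (s, ntiles X ws s)"
proof -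
  obtain Ls where Ls: "length Ls = length (root_order X ws f)"
    "\<forall>i<length Ls. is_label (Ls ! i) \<and> card (Ls ! i) = root_size X ws f (root_order X ws f ! i)"
    "\<forall>i<length Ls. \<forall>s. root_order X ws f ! i = Some s \<longrightarrow> lam (s, ntiles X ws s) = Ls ! i"
    using run[unfolded label_run_def, THEN conjunct1] by blast
  obtain i where "i < length (root_order X ws f)" "root_order X ws f ! i = Some s"
    using root_in_root_order[OF tiling assms] by (metis in_set_conv_nth)
  with Ls show ?thesis
    by (simp add: root_size_def)
qed

lemma lam_plain_tile:
  assumes "s < length X" "j < ntiles X ws s" "present X ws f s j"
    "f (tiles X ws s ! j) \<notin> {Alpha, Beta}"
  shows "lam (s, j) = lam (s, Suc j)"
proof -
  have "\<forall>s<length X. \<forall>j<ntiles X ws s. present X ws f s j \<and> f (tiles X ws s ! j) \<notin> {Alpha, Beta}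
      \<longrightarrow> lam (s, j) = lam (s, Suc j)"
    using run[unfolded label_run_def, THEN conjunct2, THEN conjunct1] .
  with assms show ?thesis
    by blast
qed

lemma lam_branching_tile:
  assumes "k < length ws" "f k \<in> {Alpha, Beta}"
    and "c = cont_strip X ws f k" "d = d_strip X ws f k" "e = other X ws k d"
    and "present X ws f c (Suc (tidx X ws c k))"
  shows "lam (d, tidx X ws d k) \<union> lam (e, tidx X ws e k) = lam (c, Suc (tidx X ws c k))"
    "card (lam (d, tidx X ws d k)) = leafcount X ws f (d, tidx X ws d k)"
    "card (lam (e, tidx X ws e k)) = leafcount X ws f (e, tidx X ws e k)"
    "succ_label (lam (d, tidx X ws d k)) (lam (e, tidx X ws e k))"
proof -
  have "\<forall>k<length ws. f k \<in> {Alpha, Beta} \<and>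
         present X ws f (cont_strip X ws f k) (Suc (tidx X ws (cont_strip X ws f k) k)) \<longrightarrow>
        (let c = cont_strip X ws f k; d = d_strip X ws f k; e = other X ws k d;
             Dseg = (d, tidx X ws d k); Cseg = (e, tidx X ws e k) in
         lam Dseg \<union> lam Cseg = lam (c, Suc (tidx X ws c k)) \<and>
         card (lam Dseg) = leafcount X ws f Dseg \<and>
         card (lam Cseg) = leafcount X ws f Cseg \<and>
         succ_label (lam Dseg) (lam Cseg))"
    using run[unfolded label_run_def, THEN conjunct2, THEN conjunct2] .
  with assms show "lam (d, tidx X ws d k) \<union> lam (e, tidx X ws e k) = lam (c, Suc (tidx X ws c k))"
    "card (lam (d, tidx X ws d k)) = leafcount X ws f (d, tidx X ws d k)"
    "card (lam (e, tidx X ws e k)) = leafcount X ws f (e, tidx X ws e k)"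
    "succ_label (lam (d, tidx X ws d k)) (lam (e, tidx X ws e k))"
    by (simp_all add: Let_def)
qed

text \<open>An alpha on the north-strip of a beta tile below it would force the beta tile to be empty.\<close>

lemma present_above_Beta:
  assumes k: "k < length ws" "f k = Beta"
  defines "v \<equiv> tv X ws k"
  shows "present X ws f v (Suc (tidx X ws v k))"
proof -
  have kv: "tidx X ws v k < ntiles X ws v" "tiles X ws v ! tidx X ws v k = k"
    using tidx_tiles[of X ws v k] k(1) by (simp_all add: in_tile_def v_def)
  have "\<not> erases X f v (tiles X ws v ! a)" if a: "a < Suc (tidx X ws v k)" for a
  proof
    define k' where "k' = tiles X ws v ! a"
    assume "erases X f v k'"
    then have v: "X ! v = Z" and k': "f k' = Alpha"
      using tv_H_free[OF k(1)] by (auto simp: erases_def v_def)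
    then have "a \<noteq> tidx X ws v k"
      using kv(2) k(2) k'_def by auto
    then have a: "a < tidx X ws v k"
      using a by simp
    then have "k' < k" "k' < length ws" "in_tile X ws v k'"
      using tiles_strict_mono[OF a kv(1)] tiles_nth[of a X ws v] kv k'_def by auto
    then have "k' < k" "v = tv X ws k'"
      using v tu_Z_free by (auto simp: in_tile_def)
    then have "forced_empty X ws f k"
      using k' by (auto simp: forced_empty_def in_tile_def v_def)
    then show False
      using forced_empty_Emp[OF k(1)] k(2) by simp
  qed
  then show ?thesis
    using kv(1) by (auto simp: present_def)
qed

end

locale west_strip = label_passing +
  fixes w :: nat
  assumes w_less: "w < length X" and w_H: "X ! w = H"
begin

abbreviation N :: nat where "N \<equiv> ntiles X ws w"

abbreviation wtile :: "nat \<Rightarrow> nat" where "wtile j \<equiv> tiles X ws w ! j"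

lemma erases_w_iff: "erases X f w k \<longleftrightarrow> f k = Beta"
  using w_H by (simp add: erases_def)

lemma present_w: "j \<le> N \<Longrightarrow> \<forall>i<j. f (wtile i) \<noteq> Beta \<Longrightarrow> present X ws f w j"
  by (simp add: present_def erases_w_iff)

lemma w_is_tu: "k < length ws \<Longrightarrow> in_tile X ws w k \<Longrightarrow> w = tu X ws k"
  using tv_H_free w_H by (auto simp: in_tile_def)

lemma lam_pass_plain:
  assumes "j < N" "\<forall>i<j. f (wtile i) \<noteq> Beta" "f (wtile j) \<notin> {Alpha, Beta}"
  shows "lam (w, j) = lam (w, Suc j)"
  using lam_plain_tile[OF w_less assms(1) present_w assms(3)] assms(1,2) by simp

lemma lam_eq_across_plain:
  assumes "i \<le> b" "b \<le> N" "\<forall>j<i. f (wtile j) \<noteq> Beta"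
    and "\<forall>j\<in>{i..<b}. f (wtile j) \<notin> {Alpha, Beta}"
  shows "lam (w, i) = lam (w, b)"
  using assms
proof (induction b rule: dec_induct)
  case base
  then show ?case by simp
next
  case (step b)
  have "\<forall>j<b. f (wtile j) \<noteq> Beta"
    using step.prems(2,3) by (metis atLeastLessThan_iff insertCI less_SucI not_le)
  then have "lam (w, b) = lam (w, Suc b)"
    using lam_pass_plain step by simp
  with step show ?case by simp
qed

lemma lam_split_Alpha:
  assumes j: "j < N" "f (wtile j) = Alpha" and no_Beta: "\<forall>i<j. f (wtile i) \<noteq> Beta"
  shows "card (lam (w, j)) = leafcount X ws f (w, j)"
    "\<exists>C. lam (w, j) \<union> C = lam (w, Suc j) \<and> succ_label (lam (w, j)) C"
proof -
  define k where "k = wtile j"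
  have k: "k < length ws" "tu X ws k = w" "tidx X ws w k = j" "f k = Alpha"
    using tiles_nth[OF j(1)] w_is_tu j(2) k_def by auto
  have strips: "cont_strip X ws f k = w" "d_strip X ws f k = w"
    using k w_H Alpha_tv_Z by (simp_all add: cont_strip_def d_strip_def)
  have "present X ws f w (Suc j)"
    using present_w no_Beta j by (simp add: less_Suc_eq)
  note split = lam_branching_tile[OF k(1) _ strips[symmetric] refl] k(3,4) this
  show "card (lam (w, j)) = leafcount X ws f (w, j)"
    using split(2) split(5-) by simp
  show "\<exists>C. lam (w, j) \<union> C = lam (w, Suc j) \<and> succ_label (lam (w, j)) C"
    using split(1,4) split(5-) by auto
qed

text \<open>Beyond a beta tile the line of w is erased: the tree continues along the other strip
  of the tile, and w receives the lower part C of the split.\<close>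

lemma card_lam_Beta:
  assumes j: "j < N" "f (wtile j) = Beta"
  shows "card (lam (w, j)) = leafcount X ws f (w, j)"
proof -
  define k where "k = wtile j"
  have k: "k < length ws" "tu X ws k = w" "tidx X ws w k = j" "f k = Beta"
    using tiles_nth[OF j(1)] w_is_tu j(2) k_def by auto
  have "tu X ws k \<noteq> tv X ws k"
    using rank_tv_less_tu[OF k(1)] by auto
  then have strips: "cont_strip X ws f k = tv X ws k" "d_strip X ws f k = tv X ws k"
    "other X ws k (tv X ws k) = w"
    using k w_H by (auto simp: cont_strip_def d_strip_def other_def)
  from lam_branching_tile(3)[OF k(1) _ strips(1,2)[symmetric] strips(3)[symmetric]]
  show ?thesis
    using present_above_Beta[OF k(1,4)] k(3,4) by simp
qed

lemma card_lam_first_branching: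
  assumes "i \<le> N" "\<forall>j<i. f (wtile j) \<noteq> Beta"
  obtains b where "i \<le> b" "b \<le> N" "\<forall>j\<in>{i..<b}. f (wtile j) \<notin> {Alpha, Beta}"
    "card (lam (w, b)) = leafcount X ws f (w, b)"
proof (cases "\<exists>j\<in>{i..<N}. f (wtile j) \<in> {Alpha, Beta}")
  case True
  define b where "b = (LEAST j. j \<in> {i..<N} \<and> f (wtile j) \<in> {Alpha, Beta})"
  from True obtain j where "j \<in> {i..<N} \<and> f (wtile j) \<in> {Alpha, Beta}"
    by blast
  then have "b \<in> {i..<N} \<and> f (wtile b) \<in> {Alpha, Beta}"
    unfolding b_def by (rule LeastI)
  then have b: "b \<in> {i..<N}" "f (wtile b) \<in> {Alpha, Beta}"
    by simp_all
  have plain: "\<forall>j\<in>{i..<b}. f (wtile j) \<notin> {Alpha, Beta}"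
  proof
    fix j
    assume "j \<in> {i..<b}"
    then have "j < b" "j \<in> {i..<N}"
      using b(1) by auto
    then show "f (wtile j) \<notin> {Alpha, Beta}"
      using not_less_Least[of j "\<lambda>j. j \<in> {i..<N} \<and> f (wtile j) \<in> {Alpha, Beta}"] b_def by blast
  qed
  have "card (lam (w, b)) = leafcount X ws f (w, b)"
  proof (cases "f (wtile b) = Alpha")
    case True
    have "\<forall>j<b. f (wtile j) \<noteq> Beta"
      using assms(2) plain by (metis atLeastLessThan_iff insertCI not_le)
    then show ?thesis
      using lam_split_Alpha(1) b(1) True by simp
  next
    case False
    then show ?thesis
      using card_lam_Beta b by simp
  qed
  with that b(1) plain show thesis
    by auto
next
  case False
  then have "\<forall>j<N. f (wtile j) \<noteq> Beta"
    using assms(2) by (metis atLeastLessThan_iff insertCI not_le)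
  then have "is_root X ws f w"
    by (simp add: is_root_def present_w)
  with that assms(1) False show thesis
    using card_root_label[OF w_less] by auto
qed

lemma card_lam_leaf: "card (lam (w, 0)) = 1"
proof -
  obtain b where b: "b \<le> N" "\<forall>j\<in>{0..<b}. f (wtile j) \<notin> {Alpha, Beta}"
    and card: "card (lam (w, b)) = leafcount X ws f (w, b)"
    using card_lam_first_branching[of 0] by blast
  have "lam (w, 0) = lam (w, b)"
    using lam_eq_across_plain[of 0 b] b by simp
  moreover have "leafcount X ws f (w, b) = 1"
    using leafcount_eq_1[OF w_less b(1)] b(2) by simp
  ultimately show ?thesis
    using card by simp
qed

lemma lam_finite_nonempty:
  assumes "i \<le> N" "\<forall>j<i. f (wtile j) \<noteq> Beta"
  shows "finite (lam (w, i)) \<and> lam (w, i) \<noteq> {}"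
proof -
  obtain b where b: "i \<le> b" "b \<le> N" "\<forall>j\<in>{i..<b}. f (wtile j) \<notin> {Alpha, Beta}"
    and card: "card (lam (w, b)) = leafcount X ws f (w, b)"
    using card_lam_first_branching[OF assms] by blast
  have "\<forall>j<b. \<not> erases X f w (wtile j)"
    using assms(2) b(3) by (metis atLeastLessThan_iff erases_w_iff insertCI not_le)
  then have "0 < card (lam (w, b))"
    using card leafcount_pos[OF w_less b(2)] by simp
  moreover have "lam (w, i) = lam (w, b)"
    using lam_eq_across_plain b assms(2) by simp
  ultimately show ?thesis
    by (simp add: card_gt_0_iff)
qed

lemma Max_lam_leaf:
  assumes "i \<le> N" "\<forall>j<i. f (wtile j) \<noteq> Beta"
  shows "Max (lam (w, 0)) = Max (lam (w, i))"
  using assms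
proof (induction i)
  case 0
  then show ?case by simp
next
  case (Suc i)
  have "Max (lam (w, i)) = Max (lam (w, Suc i))"
  proof (cases "f (wtile i) = Alpha")
    case True
    have "i < N" "\<forall>j<i. f (wtile j) \<noteq> Beta"
      using Suc.prems by auto
    then obtain C where C: "lam (w, i) \<union> C = lam (w, Suc i)" "succ_label (lam (w, i)) C"
      using lam_split_Alpha(2) True by blast
    moreover have "finite (lam (w, Suc i))"
      using lam_finite_nonempty Suc.prems by blast
    ultimately show ?thesis
      using Max_Un_succ_label by metis
  next
    case False
    then show ?thesis
      using lam_pass_plain Suc.prems by simp
  qed
  with Suc show ?case
    by simp
qed

end

(* The hypothesis X \<in> Bnr n r only names the parameters n and r. *)

theorem lemma3p9:
  fixes X :: "letter list" and n r :: nat and ws :: "nat list" and f :: "nat \<Rightarrow> sym"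
    and lam :: "nat \<times> nat \<Rightarrow> nat set" and w t :: nat and J :: "nat set"
  assumes "X \<in> Bnr n r"
    and "is_tiling X ws"
    and "is_RAT X ws f"
    and "label_run X ws f lam"
    and "w < length X" and "X ! w = H"
    and "t < length ws" and "in_tile X ws w t"
    and "\<forall>t'<t. in_tile X ws w t' \<longrightarrow> f t' \<noteq> Beta"
    and "J = lam (w, tidx X ws w t)"
  shows "lam (w, 0) = {Max J}"
proof -
  interpret west_strip X ws f lam w
    using assms(2-6) by unfold_locales
  define p where "p = tidx X ws w t"
  have p: "p < N" "wtile p = t"
    using tidx_tiles[OF assms(8,7)] p_def by simp_all
  have no_Beta: "\<forall>j<p. f (wtile j) \<noteq> Beta"
    using assms(9) tiles_strict_mono tiles_nth(2) p by (metis order.strict_trans)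
  obtain x where "lam (w, 0) = {x}"
    using card_lam_leaf card_1_singletonE by blast
  moreover have "Max (lam (w, 0)) = Max J"
    using Max_lam_leaf[of p] p no_Beta assms(10) p_def by simp
  ultimately show ?thesis
    by simp
qed

end
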